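(* Let $\psi:\mathbb R^d\to\mathbb R^d$ be differentiable and bijective, and suppose there are constants $0\le\mathfrak m_1<\infty$ and $0\le\mathfrak m_2<1$ such that $\|\psi(v)-v\|\le\mathfrak m_1$ and $\|\nabla\psi(v)-I\|_{op}\le\mathfrak m_2$ for all $v\in\mathbb R^d$. Then for every $1<q<\infty$, \[ \mathsf R_q(\psi_\#\boldsymbol\gamma_d\,\|\,\boldsymbol\gamma_d)\le\frac{d\,\mathfrak m_2}{1-\mathfrak m_2}+\sqrt d\,\mathfrak m_1+\frac{q\,\mathfrak m_1^2}2. \]
   Context: $\boldsymbol\gamma_d=\mathcal N(0,I_d)$; $\psi_\#\boldsymbol\gamma_d$ is its pushforward under $\psi$; $\|\cdot\|_{op}$ is the Euclidean operator norm. For $q>1$, $\mathsf R_q(\mu\|\pi)=\frac1{q-1}\log\mathbb E_\pi[(d\mu/d\pi)^q]$ if $\mu\ll\pi$, else $+\infty$. *)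

theory Defs
  imports "HOL-Probability.Probability"
begin

definition std_gaussian :: "'a::euclidean_space measure" where
  "std_gaussian = density lborel
     (\<lambda>x. ennreal ((2 * pi) powr (- real DIM('a) / 2) * exp (- (norm x)\<^sup>2 / 2)))"

definition renyi_div :: "real \<Rightarrow> 'a measure \<Rightarrow> 'a measure \<Rightarrow> ereal" where
  "renyi_div q \<mu> \<pi> =
     (if sets \<mu> = sets \<pi> \<and> absolutely_continuous \<pi> \<mu> then
        (let I = (\<integral>\<^sup>+ x. ennreal (enn2real (RN_deriv \<pi> \<mu> x) powr q) \<partial>\<pi>) in
         if I = \<infinity> then \<infinity> else ereal (ln (enn2real I) / (q - 1)))
      else \<infinity>)"

end

theory Submission
  imports Defs
begin

(* Write gamma for the standard Gaussian on R^d and phi for the inverse of psi. As D psi is within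
   m2 < 1 of the identity, |det D psi| >= (1 - m2)^d, so by the change of variables formula the
   density of psi_# gamma relative to gamma is at most
     h y = (1 - m2)^(-d) * exp ((|y|^2 - |phi y|^2) / 2).
   Hence E_gamma[(d psi_# gamma / d gamma)^q] <= E_(psi_# gamma)[h^(q-1)] = E_gamma[h (psi x)^(q-1)],
   and |psi x| <= |x| + m1 reduces the last expectation to the moment generating function of |x|
   under gamma, which completing the square bounds by exp (s sqrt d + s^2/2). It remains to note
   that ln (1 / (1 - m2)) <= m2 / (1 - m2). *)

section \<open>Bounding Renyi divergences by a density bound\<close>

lemma absolutely_continuous_of_le_density:
  assumes N: "sets N = sets M" and f: "f \<in> borel_measurable M"
    and le: "\<And>A. A \<in> sets M \<Longrightarrow> emeasure N A \<le> emeasure (density M f) A"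
  shows "absolutely_continuous M N"
  unfolding absolutely_continuous_def
proof
  fix A assume "A \<in> null_sets M"
  then have "A \<in> null_sets (density M f)"
    using absolutely_continuousI_density[OF f] by (auto simp: absolutely_continuous_def)
  with le[of A] N show "A \<in> null_sets N"
    by (auto simp: null_sets_def)
qed

lemma (in finite_measure) AE_le_of_nn_integral_indicator_le:
  assumes [measurable]: "f \<in> borel_measurable M" "g \<in> borel_measurable M"
    and le: "\<And>A. A \<in> sets M \<Longrightarrow> (\<integral>\<^sup>+x. f x * indicator A x \<partial>M) \<le> (\<integral>\<^sup>+x. ennreal (g x) * indicator A x \<partial>M)"
  shows "AE x in M. f x \<le> ennreal (g x)"
proof -
  have "AE x in M. \<not> (ennreal (g x) < f x \<and> g x \<le> real n)" for n :: nat
  proof (rule ccontr)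
    define B where "B = {x \<in> space M. ennreal (g x) < f x \<and> g x \<le> real n}"
    have [measurable]: "B \<in> sets M" unfolding B_def by measurable
    assume not_AE_B: "\<not> (AE x in M. \<not> (ennreal (g x) < f x \<and> g x \<le> real n))"
    have not_AE: "\<not> (AE x in M. f x * indicator B x \<le> ennreal (g x) * indicator B x)"
    proof
      assume "AE x in M. f x * indicator B x \<le> ennreal (g x) * indicator B x"
      then have "AE x in M. \<not> (ennreal (g x) < f x \<and> g x \<le> real n)"
        using AE_space
      proof eventually_elim
        case (elim x)
        then show ?case by (cases "x \<in> B") (auto simp: B_def dest: leD)
      qed
      with not_AE_B show False by contradiction
    qed
    have "(\<integral>\<^sup>+x. ennreal (g x) * indicator B x \<partial>M) \<le> (\<integral>\<^sup>+x. ennreal (real n) \<partial>M)"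
      by (intro nn_integral_mono) (auto simp: B_def indicator_def)
    then have "(\<integral>\<^sup>+x. ennreal (g x) * indicator B x \<partial>M) \<noteq> \<infinity>"
      by (auto simp: top_unique ennreal_mult_eq_top_iff)
    then have "(\<integral>\<^sup>+x. ennreal (g x) * indicator B x \<partial>M) < (\<integral>\<^sup>+x. f x * indicator B x \<partial>M)"
      using not_AE by (intro nn_integral_less) (auto simp: B_def indicator_def less_imp_le)
    with le[of B] show False by simp
  qed
  then have "AE x in M. \<forall>n::nat. \<not> (ennreal (g x) < f x \<and> g x \<le> real n)"
    by (subst AE_all_countable) blast
  then show ?thesis
    by (rule eventually_mono) (meson real_arch_simple not_le)
qed

lemma (in finite_measure) AE_RN_deriv_le:
  assumes N: "sets N = sets M" and g: "g \<in> borel_measurable M"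
    and le: "\<And>A. A \<in> sets M \<Longrightarrow> emeasure N A \<le> emeasure (density M (\<lambda>x. ennreal (g x))) A"
  shows "AE x in M. RN_deriv M N x \<le> ennreal (g x)"
proof (rule AE_le_of_nn_integral_indicator_le[OF _ g])
  have "absolutely_continuous M N"
    using N g le by (intro absolutely_continuous_of_le_density) auto
  then have "density M (RN_deriv M N) = N"
    using N by (rule density_RN_deriv)
  show "(\<integral>\<^sup>+x. RN_deriv M N x * indicator A x \<partial>M) \<le> (\<integral>\<^sup>+x. ennreal (g x) * indicator A x \<partial>M)"
    if A: "A \<in> sets M" for A
  proof -
    have "(\<integral>\<^sup>+x. RN_deriv M N x * indicator A x \<partial>M) = emeasure N A"
      using emeasure_density[of "RN_deriv M N" M A] A \<open>density M (RN_deriv M N) = N\<close> by simp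
    with le[OF A] A g show ?thesis
      by (simp add: emeasure_density)
  qed
qed simp

lemma ennreal_powr_le_mult_powr:
  fixes r :: ennreal
  assumes r: "r \<le> ennreal h" and q: "1 \<le> q"
  shows "ennreal (enn2real r powr q) \<le> r * ennreal (h powr (q - 1))"
proof -
  obtain t where t: "r = ennreal t" "0 \<le> t"
    using r by (cases r) (auto simp: top_unique)
  show ?thesis
  proof (cases "t = 0")
    case False
    then have "t \<le> h" using r t ennreal_le_iff2 by auto
    have "t powr q = t * t powr (q - 1)"
      using t by (simp add: powr_mult_base)
    also have "\<dots> \<le> t * h powr (q - 1)"
      using t \<open>t \<le> h\<close> q by (intro mult_left_mono powr_mono2) auto
    finally show ?thesis
      using t by (simp add: ennreal_mult[symmetric])
  qed (use t in simp)
qed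

lemma (in sigma_finite_measure) renyi_div_le:
  assumes N: "sets N = sets M" and ac: "absolutely_continuous M N" and q: "1 < q"
    and h [measurable]: "h \<in> borel_measurable M"
    and RN_le: "AE x in M. RN_deriv M N x \<le> ennreal (h x)"
    and bound: "(\<integral>\<^sup>+x. ennreal (h x powr (q - 1)) \<partial>N) \<le> ennreal B" and B: "1 \<le> B"
  shows "renyi_div q N M \<le> ereal (ln B / (q - 1))"
proof -
  define I where "I = (\<integral>\<^sup>+x. ennreal (enn2real (RN_deriv M N x) powr q) \<partial>M)"
  have "I \<le> (\<integral>\<^sup>+x. RN_deriv M N x * ennreal (h x powr (q - 1)) \<partial>M)"
    unfolding I_def using RN_le q
    by (intro nn_integral_mono_AE) (auto elim!: eventually_mono intro: ennreal_powr_le_mult_powr)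
  also have "\<dots> = (\<integral>\<^sup>+x. ennreal (h x powr (q - 1)) \<partial>N)"
    using ac N by (simp add: RN_deriv_nn_integral)
  finally have "I \<le> ennreal B"
    using bound by simp
  then have "I \<noteq> \<infinity>" and "enn2real I \<le> B"
    using B by (auto simp: top_unique enn2real_leI)
  \<comment> \<open>\<open>ln 0 = 0\<close>, so the degenerate case \<open>I = 0\<close> is where \<open>1 \<le> B\<close> is needed\<close>
  have "ln (enn2real I) \<le> ln B"
  proof (cases "enn2real I = 0")
    case False
    then have "0 < enn2real I"
      using enn2real_nonneg[of I] by linarith
    with \<open>enn2real I \<le> B\<close> show ?thesis by simp
  qed (use B in simp)
  then show ?thesis
    using N ac \<open>I \<noteq> \<infinity>\<close> q unfolding renyi_div_def I_def[symmetric]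
    by (simp add: divide_right_mono)
qed

lemma ln_inverse_power_le: "m < 1 \<Longrightarrow> ln (1 / (1 - m) ^ n) \<le> real n * m / (1 - m)"
proof -
  assume m: "m < 1"
  then have "ln (1 / (1 - m) ^ n) = real n * ln (1 / (1 - m))"
    by (simp add: ln_div ln_realpow)
  also have "\<dots> \<le> real n * (1 / (1 - m) - 1)"
    using m by (intro mult_left_mono ln_le_minus_one) auto
  finally show ?thesis
    using m by (simp add: field_simps)
qed

section \<open>Gaussian integrals\<close>

lemma nn_integral_exp_neg_sq:
  assumes \<beta>: "0 < \<beta>"
  shows "(\<integral>\<^sup>+t. ennreal (exp (- \<beta> * t\<^sup>2 / 2)) \<partial>lborel) = ennreal (sqrt (2 * pi / \<beta>))"
proof -
  define \<sigma> where "\<sigma> = 1 / sqrt \<beta>"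
  have "\<sigma> > 0" and \<sigma>_sq: "\<sigma>\<^sup>2 = 1 / \<beta>"
    using \<beta> by (simp_all add: \<sigma>_def power_divide)
  have density: "exp (- \<beta> * t\<^sup>2 / 2) = sqrt (2 * pi / \<beta>) * normal_density 0 \<sigma> t" for t
    using \<beta> by (simp add: normal_density_def \<sigma>_sq field_simps real_sqrt_divide)
  interpret normal: prob_space "density lborel (normal_density 0 \<sigma>)"
    using \<open>\<sigma> > 0\<close> by (rule prob_space_normal_density)
  have "(\<integral>\<^sup>+t. ennreal (normal_density 0 \<sigma> t) \<partial>lborel) = 1"
    using normal.emeasure_space_1 by (simp add: emeasure_density)
  then show ?thesis
    unfolding density using \<beta> by (simp add: ennreal_mult nn_integral_cmult)
qed

lemma nn_integral_exp_neg_norm_sq: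
  assumes \<beta>: "0 < \<beta>"
  shows "(\<integral>\<^sup>+x. ennreal (exp (- \<beta> * (norm x)\<^sup>2 / 2)) \<partial>(lborel :: 'a::euclidean_space measure))
    = ennreal ((2 * pi / \<beta>) powr (real DIM('a) / 2))"
proof -
  have "ennreal (exp (- \<beta> * (norm x)\<^sup>2 / 2)) = (\<Prod>b\<in>Basis. ennreal (exp (- \<beta> * (x \<bullet> b)\<^sup>2 / 2)))"
    for x :: 'a
  proof -
    have "(norm x)\<^sup>2 = (\<Sum>b\<in>Basis. (x \<bullet> b) * (x \<bullet> b))"
      by (simp add: power2_norm_eq_inner euclidean_inner[of x x])
    then have "- \<beta> * (norm x)\<^sup>2 / 2 = (\<Sum>b\<in>Basis. - \<beta> * (x \<bullet> b)\<^sup>2 / 2)"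
      by (simp add: power2_eq_square sum_distrib_left sum_divide_distrib)
    then show ?thesis
      by (simp add: exp_sum prod_ennreal)
  qed
  then have "(\<integral>\<^sup>+x. ennreal (exp (- \<beta> * (norm x)\<^sup>2 / 2)) \<partial>(lborel :: 'a measure))
      = (\<Prod>b\<in>(Basis :: 'a set). \<integral>\<^sup>+t. ennreal (exp (- \<beta> * t\<^sup>2 / 2)) \<partial>lborel)"
    by (simp only:) (rule nn_integral_lborel_prod; simp)
  also have "\<dots> = ennreal (sqrt (2 * pi / \<beta>) ^ DIM('a))"
    using \<beta> nn_integral_exp_neg_sq[OF \<beta>] by (simp add: ennreal_power)
  finally show ?thesis
    using \<beta> by (simp add: powr_half_sqrt[symmetric] powr_realpow[symmetric] powr_powr)
qed

lemma sets_std_gaussian [simp, measurable_cong]: "sets std_gaussian = sets borel"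
  by (simp add: std_gaussian_def)

lemma nn_integral_std_gaussian:
  assumes "f \<in> borel_measurable borel"
  shows "(\<integral>\<^sup>+x. f x \<partial>std_gaussian) = (\<integral>\<^sup>+x. ennreal ((2 * pi) powr (- real DIM('a) / 2)
    * exp (- (norm x)\<^sup>2 / 2)) * f x \<partial>(lborel :: 'a::euclidean_space measure))"
  unfolding std_gaussian_def using assms by (simp add: nn_integral_density)

lemma prob_space_std_gaussian: "prob_space (std_gaussian :: 'a::euclidean_space measure)"
proof
  have "emeasure (std_gaussian :: 'a measure) (space std_gaussian)
      = ennreal ((2 * pi) powr (- real DIM('a) / 2))
        * (\<integral>\<^sup>+x. ennreal (exp (- 1 * (norm x)\<^sup>2 / 2)) \<partial>(lborel :: 'a measure))"
    by (simp add: std_gaussian_def emeasure_density ennreal_mult nn_integral_cmult)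
  also have "\<dots> = ennreal ((2 * pi) powr (- real DIM('a) / 2) * (2 * pi) powr (real DIM('a) / 2))"
    using nn_integral_exp_neg_norm_sq[of 1, where 'a='a] by (simp add: ennreal_mult)
  also have "\<dots> = 1"
    by (simp add: powr_add[symmetric])
  finally show "emeasure (std_gaussian :: 'a measure) (space std_gaussian) = 1" .
qed

lemma exp_completed_square_le:
  fixes s a t :: real
  assumes s: "0 \<le> s" and a: "s < a"
  shows "exp (- t\<^sup>2 / 2) * exp (s * t) \<le> exp (s * a / 2) * exp (- ((a - s) / a) * t\<^sup>2 / 2)"
proof -
  have "0 < a" using s a by linarith
  \<comment> \<open>AM-GM trades the linear term for a Gaussian of smaller precision\<close>
  have "0 \<le> (t - a)\<^sup>2" by simp
  then have "t \<le> a / 2 + t\<^sup>2 / (2 * a)"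
    using \<open>0 < a\<close> by (simp add: field_simps power2_eq_square)
  then have "s * t \<le> s * (a / 2 + t\<^sup>2 / (2 * a))"
    using s by (rule mult_left_mono)
  then have "- t\<^sup>2 / 2 + s * t \<le> s * a / 2 + (- ((a - s) / a) * t\<^sup>2 / 2)"
    using \<open>0 < a\<close> by (simp add: field_simps)
  then show ?thesis
    by (simp flip: exp_add)
qed

lemma nn_integral_exp_norm_std_gaussian_le_powr:
  assumes s: "0 \<le> s" and a: "s < a"
  shows "(\<integral>\<^sup>+x. ennreal (exp (s * norm x)) \<partial>(std_gaussian :: 'a::euclidean_space measure))
    \<le> ennreal (exp (s * a / 2) * (a / (a - s)) powr (real DIM('a) / 2))"
proof -
  define d where "d = real DIM('a)"
  define \<beta> where "\<beta> = (a - s) / a"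
  have "0 < \<beta>"
    using s a by (simp add: \<beta>_def)
  have "(\<integral>\<^sup>+x. ennreal (exp (s * norm x)) \<partial>(std_gaussian :: 'a measure))
      = (\<integral>\<^sup>+x. ennreal ((2 * pi) powr (- d / 2) * (exp (- (norm x)\<^sup>2 / 2) * exp (s * norm x)))
          \<partial>(lborel :: 'a measure))"
    by (simp add: nn_integral_std_gaussian d_def ennreal_mult' mult.assoc)
  also have "\<dots> \<le> (\<integral>\<^sup>+x. ennreal ((2 * pi) powr (- d / 2) * exp (s * a / 2))
      * ennreal (exp (- \<beta> * (norm x)\<^sup>2 / 2)) \<partial>(lborel :: 'a measure))"
  proof (rule nn_integral_mono)
    fix x :: 'a
    have "(2 * pi) powr (- d / 2) * (exp (- (norm x)\<^sup>2 / 2) * exp (s * norm x))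
        \<le> (2 * pi) powr (- d / 2) * exp (s * a / 2) * exp (- \<beta> * (norm x)\<^sup>2 / 2)"
      using exp_completed_square_le[OF s a, of "norm x"] by (simp add: \<beta>_def mult.assoc mult_left_mono)
    then show "ennreal ((2 * pi) powr (- d / 2) * (exp (- (norm x)\<^sup>2 / 2) * exp (s * norm x)))
        \<le> ennreal ((2 * pi) powr (- d / 2) * exp (s * a / 2)) * ennreal (exp (- \<beta> * (norm x)\<^sup>2 / 2))"
      by (simp add: ennreal_mult[symmetric] ennreal_leI)
  qed
  also have "\<dots> = ennreal ((2 * pi) powr (- d / 2) * exp (s * a / 2) * (2 * pi / \<beta>) powr (d / 2))"
    using \<open>0 < \<beta>\<close> nn_integral_exp_neg_norm_sq[OF \<open>0 < \<beta>\<close>, where 'a='a]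
    by (simp add: nn_integral_cmult d_def ennreal_mult)
  also have "\<dots> = ennreal (exp (s * a / 2) * (a / (a - s)) powr (d / 2))"
  proof -
    have "(2 * pi) powr (- d / 2) * (2 * pi / \<beta>) powr (d / 2) = (1 / \<beta>) powr (d / 2)"
      using \<open>0 < \<beta>\<close> by (simp add: powr_divide powr_minus)
    moreover have "1 / \<beta> = a / (a - s)"
      by (simp add: \<beta>_def)
    ultimately show ?thesis
      by (metis mult.commute mult.assoc)
  qed
  finally show ?thesis
    by (simp add: d_def)
qed

lemma nn_integral_exp_norm_std_gaussian_le:
  assumes s: "0 \<le> s"
  shows "(\<integral>\<^sup>+x. ennreal (exp (s * norm x)) \<partial>(std_gaussian :: 'a::euclidean_space measure))
    \<le> ennreal (exp (s * sqrt (real DIM('a)) + s\<^sup>2 / 2))"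
proof -
  define d where "d = real DIM('a)"
  have "0 < sqrt d" by (simp add: d_def)
  have "(s + sqrt d) / (s + sqrt d - s) = 1 + s / sqrt d"
    using \<open>0 < sqrt d\<close> by (simp add: field_simps)
  then have "(\<integral>\<^sup>+x. ennreal (exp (s * norm x)) \<partial>(std_gaussian :: 'a measure))
      \<le> ennreal (exp (s * (s + sqrt d) / 2) * (1 + s / sqrt d) powr (d / 2))"
    using nn_integral_exp_norm_std_gaussian_le_powr[OF s, of "s + sqrt d", where 'a='a] \<open>0 < sqrt d\<close>
    by (simp add: d_def)
  also have "\<dots> \<le> ennreal (exp (s * (s + sqrt d) / 2) * exp (s / sqrt d) powr (d / 2))"
    using s \<open>0 < sqrt d\<close> by (intro ennreal_leI mult_left_mono powr_mono2) auto
  also have "\<dots> = ennreal (exp (s * sqrt d + s\<^sup>2 / 2))"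
  proof -
    have "s / sqrt d * (d / 2) = s * (d / sqrt d) / 2"
      by simp
    then have "s / sqrt d * (d / 2) = s * sqrt d / 2"
      by (simp add: real_div_sqrt d_def)
    then show ?thesis
      by (simp add: exp_powr_real power2_eq_square field_simps flip: exp_add)
  qed
  finally show ?thesis
    by (simp add: d_def)
qed

section \<open>Coordinates and change of variables\<close>

(* The change of variables theorems of HOL-Analysis are stated for real^'n with a well-ordered
   index type 'n; basis_index is such an index type for an arbitrary Euclidean space. *)
typedef (overloaded) ('a::euclidean_space) basis_index = "Basis :: 'a set"
  using nonempty_Basis by blast

instance basis_index :: (euclidean_space) finite
proof
  have "UNIV = Abs_basis_index ` (Basis :: 'a set)"
    using type_definition.Abs_image[OF type_definition_basis_index] by (rule sym)
  then show "finite (UNIV :: 'a basis_index set)"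
    by (metis finite_Basis finite_imageI)
qed

instantiation basis_index :: (euclidean_space) linorder
begin

definition "i \<le> j \<longleftrightarrow> to_nat i \<le> to_nat (j :: 'a basis_index)"
definition "i < j \<longleftrightarrow> to_nat i < to_nat (j :: 'a basis_index)"

instance
  by intro_classes (auto simp: less_eq_basis_index_def less_basis_index_def)

end

instance basis_index :: (euclidean_space) wellorder
proof -
  have "wf {(i :: 'a basis_index, j). i < j}"
    using wf_inv_image[OF wf_less, of "to_nat :: 'a basis_index \<Rightarrow> nat"]
    by (simp add: less_basis_index_def inv_image_def)
  then show "OFCLASS('a basis_index, wellorder_class)"
    by (rule wf_wellorderI) intro_classes
qed

lemma card_basis_index: "CARD('a::euclidean_space basis_index) = DIM('a)"
  using type_definition.card[OF type_definition_basis_index] by simp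

lemma bij_betw_Rep_basis_index: "bij_betw Rep_basis_index UNIV (Basis :: 'a::euclidean_space set)"
  by (metis bij_betw_def inj_on_def Rep_basis_index_inject type_definition.Rep_range[OF type_definition_basis_index])

lemma sum_basis_index:
  "(\<Sum>i\<in>UNIV. f (Rep_basis_index i)) = (\<Sum>b\<in>(Basis :: 'a::euclidean_space set). f b)"
  using sum.reindex_bij_betw[OF bij_betw_Rep_basis_index] by blast

lemma prod_basis_index:
  "(\<Prod>i\<in>UNIV. f (Rep_basis_index i)) = (\<Prod>b\<in>(Basis :: 'a::euclidean_space set). f b)"
  using prod.reindex_bij_betw[OF bij_betw_Rep_basis_index] by blast

definition cart_of_eucl :: "'a::euclidean_space \<Rightarrow> real^'a basis_index" where
  "cart_of_eucl x = (\<chi> i. x \<bullet> Rep_basis_index i)"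

definition eucl_of_cart :: "real^'a basis_index \<Rightarrow> 'a::euclidean_space" where
  "eucl_of_cart v = (\<Sum>i\<in>UNIV. v $ i *\<^sub>R Rep_basis_index i)"

lemma eucl_of_cart_cart_of_eucl [simp]: "eucl_of_cart (cart_of_eucl x) = x"
  unfolding eucl_of_cart_def cart_of_eucl_def
  using sum_basis_index[of "\<lambda>b. (x \<bullet> b) *\<^sub>R b"] by (simp add: euclidean_representation)

lemma inner_eucl_of_cart: "eucl_of_cart v \<bullet> Rep_basis_index i = v $ i"
proof -
  have "v $ j * (Rep_basis_index j \<bullet> Rep_basis_index i) = (if j = i then v $ i else 0)" for j
    using inner_Basis[OF Rep_basis_index[of j] Rep_basis_index[of i]] Rep_basis_index_inject[of j i]
    by simp
  then show ?thesis
    by (simp add: eucl_of_cart_def inner_sum_left)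
qed

lemma cart_of_eucl_eucl_of_cart [simp]: "cart_of_eucl (eucl_of_cart v) = v"
  by (simp add: cart_of_eucl_def inner_eucl_of_cart vec_eq_iff)

lemma bounded_linear_cart_of_eucl: "bounded_linear cart_of_eucl"
  by (rule linear_conv_bounded_linear[THEN iffD1], rule linearI)
     (auto simp: cart_of_eucl_def vec_eq_iff inner_add_left)

lemma bounded_linear_eucl_of_cart: "bounded_linear eucl_of_cart"
  by (rule linear_conv_bounded_linear[THEN iffD1], rule linearI)
     (auto simp: eucl_of_cart_def scaleR_add_left sum.distrib scaleR_sum_right)

lemma norm_cart_of_eucl [simp]: "norm (cart_of_eucl x) = norm x"
proof -
  have "(norm (cart_of_eucl x))\<^sup>2 = (\<Sum>i\<in>UNIV. (x \<bullet> Rep_basis_index i)\<^sup>2)"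
    by (simp add: cart_of_eucl_def norm_vec_def L2_set_def sum_nonneg)
  also have "\<dots> = (\<Sum>b\<in>Basis. (x \<bullet> b) * (x \<bullet> b))"
    using sum_basis_index[of "\<lambda>b. (x \<bullet> b)\<^sup>2"] by (simp add: power2_eq_square)
  also have "\<dots> = (norm x)\<^sup>2"
    by (simp add: euclidean_inner[symmetric] power2_norm_eq_inner)
  finally show ?thesis by simp
qed

lemma measurable_eucl_of_cart [measurable]: "eucl_of_cart \<in> borel_measurable borel"
  by (intro borel_measurable_continuous_onI linear_continuous_on bounded_linear_eucl_of_cart)

lemma vimage_eucl_of_cart_box:
  "eucl_of_cart -` box l u = box (cart_of_eucl l) (cart_of_eucl u)"
proof -
  have range_Rep: "range Rep_basis_index = (Basis :: 'a set)"
    using type_definition.Rep_range[OF type_definition_basis_index] .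
  have "(\<forall>b\<in>Basis. P b) \<longleftrightarrow> (\<forall>i. P (Rep_basis_index i))" for P :: "'a \<Rightarrow> bool"
    unfolding range_Rep[symmetric] by simp
  then have "x \<in> box l u \<longleftrightarrow> (\<forall>i. l \<bullet> Rep_basis_index i < x \<bullet> Rep_basis_index i
      \<and> x \<bullet> Rep_basis_index i < u \<bullet> Rep_basis_index i)" for x :: 'a
    by (simp add: mem_box)
  then show ?thesis
    by (auto simp: mem_box_cart cart_of_eucl_def inner_eucl_of_cart)
qed

lemma distr_lborel_eucl_of_cart: "distr lborel borel eucl_of_cart = (lborel :: 'a::euclidean_space measure)"
proof (rule lborel_eqI[symmetric])
  fix l u :: 'a
  assume le: "\<And>b. b \<in> Basis \<Longrightarrow> l \<bullet> b \<le> u \<bullet> b"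
  have "emeasure (distr lborel borel eucl_of_cart) (box l u)
      = emeasure lborel (box (cart_of_eucl l) (cart_of_eucl u))"
    by (simp add: emeasure_distr vimage_eucl_of_cart_box)
  also have "\<dots> = (\<Prod>b\<in>Basis. (cart_of_eucl u - cart_of_eucl l) \<bullet> b)"
  proof -
    have "\<forall>b\<in>Basis. cart_of_eucl l \<bullet> b \<le> cart_of_eucl u \<bullet> (b :: real^'a basis_index)"
      using le Rep_basis_index by (auto simp: Basis_vec_def cart_eq_inner_axis[symmetric] cart_of_eucl_def)
    then show ?thesis by (simp add: emeasure_lborel_box_eq)
  qed
  also have "\<dots> = (\<Prod>i\<in>UNIV. (u - l) \<bullet> Rep_basis_index i)"
  proof -
    have "(Basis :: (real^'a basis_index) set) = range (\<lambda>i. axis i 1)"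
      by (auto simp: Basis_vec_def)
    moreover have "inj (\<lambda>i::'a basis_index. axis i (1::real))"
      by (auto simp: inj_def axis_eq_axis)
    ultimately have "(\<Prod>b\<in>Basis. (cart_of_eucl u - cart_of_eucl l) \<bullet> b)
        = (\<Prod>i\<in>UNIV. (cart_of_eucl u - cart_of_eucl l) \<bullet> axis i 1)"
      using prod.reindex[of "\<lambda>i. axis i 1" UNIV "\<lambda>b. (cart_of_eucl u - cart_of_eucl l) \<bullet> b"] by simp
    then show ?thesis
      by (simp add: cart_eq_inner_axis[symmetric] cart_of_eucl_def inner_diff_left)
  qed
  also have "\<dots> = (\<Prod>b\<in>Basis. (u - l) \<bullet> b)"
    using prod_basis_index[of "\<lambda>b. (u - l) \<bullet> b"] by simp
  finally show "emeasure (distr lborel borel eucl_of_cart) (box l u) = (\<Prod>b\<in>Basis. (u - l) \<bullet> b)" .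
qed simp

lemma emeasure_lborel_vimage_eucl_of_cart:
  "A \<in> sets borel \<Longrightarrow> emeasure lborel (eucl_of_cart -` A) = emeasure lborel (A :: 'a::euclidean_space set)"
  by (subst (2) distr_lborel_eucl_of_cart[symmetric]) (simp add: emeasure_distr)

lemma abs_det_matrix_ge_near_identity:
  fixes L :: "real^'n::{finite,wellorder} \<Rightarrow> real^'n::_"
  assumes L: "linear L" and m: "m < 1" and near_id: "\<And>h. norm (L h - h) \<le> m * norm h"
  shows "(1 - m) ^ CARD('n) \<le> \<bar>det (matrix L)\<bar>"
proof -
  let ?ball = "ball (0 :: real^'n::{finite,wellorder})"
  have lower: "(1 - m) * norm h \<le> norm (L h)" for h
    using norm_triangle_ineq2[of h "L h"] near_id[of h] by (simp add: norm_minus_commute algebra_simps)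
  have "inj L"
    unfolding linear_injective_0[OF L]
  proof (intro allI impI)
    fix x assume "L x = 0"
    then have "(1 - m) * norm x \<le> 0" using lower[of x] by simp
    then show "x = 0" using m by (simp add: mult_le_0_iff)
  qed
  then have "surj L"
    using linear_injective_imp_surjective[OF L] by simp
  have "?ball (1 - m) \<subseteq> L ` ?ball 1"
  proof
    fix y assume y: "y \<in> ?ball (1 - m)"
    obtain x where x: "y = L x" using \<open>surj L\<close> by (metis surjD)
    have "(1 - m) * norm x < 1 - m" using lower[of x] y x by simp
    then have "norm x < 1" using m by simp
    then show "y \<in> L ` ?ball 1" using x by auto
  qed
  then have "measure lebesgue (?ball (1 - m)) \<le> measure lebesgue (L ` ?ball 1)"
    by (intro measure_mono_fmeasurable measurable_linear_image[OF L]) auto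
  also have "\<dots> = \<bar>det (matrix L)\<bar> * measure lebesgue (?ball 1)"
    by (rule measure_linear_image[OF L]) auto
  finally have "(1 - m) ^ CARD('n) * measure lborel (?ball 1) \<le> \<bar>det (matrix L)\<bar> * measure lborel (?ball 1)"
    using content_ball_conv_unit_ball[of "1 - m" "0 :: real^'n::{finite,wellorder}"] m by simp
  then show ?thesis
    using content_ball_pos[of 1 "0 :: real^'n::{finite,wellorder}"] by simp
qed

lemma lmeasurable_measure_le_image_of_abs_det_ge:
  fixes f :: "real^'n::{finite,wellorder} \<Rightarrow> real^'n::_"
  assumes S: "S \<in> sets lebesgue" and deriv: "\<And>x. x \<in> S \<Longrightarrow> (f has_derivative f' x) (at x within S)"
    and inj: "inj_on f S" and image: "f ` S \<in> lmeasurable"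
    and c: "0 < c" and det_ge: "\<And>x. x \<in> S \<Longrightarrow> c \<le> \<bar>det (matrix (f' x))\<bar>"
  shows "S \<in> lmeasurable" and "c * measure lebesgue S \<le> measure lebesgue (f ` S)"
proof -
  have det_int: "(\<lambda>x. \<bar>det (matrix (f' x))\<bar>) integrable_on S"
    using measurable_differentiable_image_eq[OF S deriv inj] image by simp
  have "(\<lambda>x. c) absolutely_integrable_on S"
    by (rule measurable_bounded_by_integrable_imp_absolutely_integrable[OF _ S det_int])
       (use det_ge c in auto)
  then have c_int: "(\<lambda>x. c) integrable_on S"
    using absolutely_integrable_on_def by blast
  then have "(\<lambda>x. 1 :: real) integrable_on S"
    using integrable_on_cmult_left[of "\<lambda>x. c" S "1 / c"] c by simp
  then show S_lmeas: "S \<in> lmeasurable"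
    by (simp add: lmeasurable_iff_integrable_on)
  have "c * measure lebesgue S = integral S (\<lambda>x. c)"
    using lmeasure_integral[OF S_lmeas] integral_mult[of "\<lambda>x. 1 :: real" S c] S_lmeas
    by (simp add: lmeasurable_iff_integrable_on)
  also have "\<dots> \<le> integral S (\<lambda>x. \<bar>det (matrix (f' x))\<bar>)"
    using integral_le[OF c_int det_int] det_ge by simp
  also have "\<dots> = measure lebesgue (f ` S)"
    using measure_differentiable_image_eq[OF S deriv inj det_int] by simp
  finally show "c * measure lebesgue S \<le> measure lebesgue (f ` S)" .
qed

lemma emeasure_vimage_le_near_identity_cart:
  fixes f :: "real^'n::{finite,wellorder} \<Rightarrow> real^'n::_"
  assumes deriv: "\<And>x. (f has_derivative f' x) (at x)" and bij: "bij f" and m: "m < 1"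
    and near_id: "\<And>x h. norm (f' x h - h) \<le> m * norm h" and A: "A \<in> sets borel"
  shows "emeasure lborel (f -` A) \<le> ennreal (1 / (1 - m) ^ CARD('n)) * emeasure lborel A"
proof (cases "emeasure lborel A = \<infinity>")
  case True
  then show ?thesis using m by (simp add: ennreal_mult_top)
next
  case False
  define c where "c = (1 - m) ^ CARD('n)"
  define S where "S = f -` A"
  have "c > 0" using m by (simp add: c_def)
  have "f \<in> borel_measurable borel"
    using deriv by (intro borel_measurable_continuous_onI continuous_at_imp_continuous_on ballI has_derivative_continuous)
  then have "S \<in> sets borel"
    using A by (simp add: S_def measurable_sets_borel)
  have "f ` S = A"
    using bij by (simp add: S_def bij_def surj_image_vimage_eq)
  have "inj_on f S"
    using bij by (meson bij_is_inj inj_on_subset subset_UNIV)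
  have A_lmeas: "A \<in> lmeasurable"
    using A False by (simp add: fmeasurable_def less_top)
  have "S \<in> lmeasurable" and "c * measure lebesgue S \<le> measure lebesgue A"
    using lmeasurable_measure_le_image_of_abs_det_ge[of S f f' c] \<open>S \<in> sets borel\<close> \<open>c > 0\<close>
      \<open>inj_on f S\<close> A_lmeas deriv abs_det_matrix_ge_near_identity[OF deriv[THEN has_derivative_linear] m near_id]
    by (auto simp: \<open>f ` S = A\<close> c_def has_derivative_at_withinI)
  then have "emeasure lebesgue S \<le> ennreal (1 / c) * emeasure lebesgue A"
    using \<open>c > 0\<close> by (simp add: emeasure_eq_measure2 A_lmeas ennreal_mult[symmetric] ennreal_leI field_simps)
  then show ?thesis
    using \<open>S \<in> sets borel\<close> A by (simp add: S_def c_def)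
qed

section \<open>Diffeomorphisms close to the identity\<close>

locale near_identity_diffeo =
  fixes \<psi> :: "'a::euclidean_space \<Rightarrow> 'a" and \<psi>' :: "'a \<Rightarrow> 'a \<Rightarrow> 'a" and m :: real
  assumes has_derivative: "\<And>x. (\<psi> has_derivative \<psi>' x) (at x)"
    and bij: "bij \<psi>"
    and less_one: "m < 1"
    and onorm_deriv_minus_id_le: "\<And>x. onorm (\<lambda>h. \<psi>' x h - h) \<le> m"
begin

lemma bounded_linear_deriv_minus_id: "bounded_linear (\<lambda>h. \<psi>' x h - h)"
  using has_derivative[THEN has_derivative_bounded_linear]
  by (intro bounded_linear_sub bounded_linear_ident)

lemma nonneg: "0 \<le> m"
  using onorm_pos_le[OF bounded_linear_deriv_minus_id] onorm_deriv_minus_id_le by (rule order_trans)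

lemma norm_deriv_minus_id_le: "norm (\<psi>' x h - h) \<le> m * norm h"
proof -
  have "norm (\<psi>' x h - h) \<le> onorm (\<lambda>h. \<psi>' x h - h) * norm h"
    using bounded_linear_deriv_minus_id by (rule onorm)
  also have "\<dots> \<le> m * norm h"
    by (intro mult_right_mono onorm_deriv_minus_id_le) simp
  finally show ?thesis .
qed

lemma borel_measurable_psi [measurable]: "\<psi> \<in> borel_measurable borel"
  using has_derivative
  by (intro borel_measurable_continuous_onI continuous_at_imp_continuous_on ballI has_derivative_continuous)

lemma inv_psi [simp]: "inv \<psi> (\<psi> x) = x"
  using bij by (simp add: bij_is_inj inv_f_f)

lemma psi_inv [simp]: "\<psi> (inv \<psi> y) = y"
  using bij by (simp add: bij_is_surj surj_f_inv_f)

lemma norm_diff_ge: "(1 - m) * norm (x - y) \<le> norm (\<psi> x - \<psi> y)"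
proof -
  have "norm ((\<psi> x - x) - (\<psi> y - y)) \<le> m * norm (x - y)"
  proof (rule differentiable_bound[of UNIV])
    show "((\<lambda>x. \<psi> x - x) has_derivative (\<lambda>h. \<psi>' z h - h)) (at z within UNIV)" for z
      by (intro derivative_intros has_derivative)
  qed (use onorm_deriv_minus_id_le in auto)
  moreover have "norm (x - y) \<le> norm (\<psi> x - \<psi> y) + norm ((\<psi> x - x) - (\<psi> y - y))"
    using norm_triangle_ineq4[of "\<psi> x - \<psi> y" "(\<psi> x - x) - (\<psi> y - y)"] by (simp add: algebra_simps)
  ultimately show ?thesis by (simp add: algebra_simps)
qed

lemma lipschitz_on_inv: "(1 / (1 - m))-lipschitz_on UNIV (inv \<psi>)"
proof (rule lipschitz_onI)
  fix y y' :: 'a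
  have "(1 - m) * dist (inv \<psi> y) (inv \<psi> y') \<le> dist y y'"
    using norm_diff_ge[of "inv \<psi> y" "inv \<psi> y'"] by (simp add: dist_norm)
  then show "dist (inv \<psi> y) (inv \<psi> y') \<le> 1 / (1 - m) * dist y y'"
    using less_one by (simp add: field_simps)
qed (use less_one in simp)

lemma borel_measurable_inv [measurable]: "inv \<psi> \<in> borel_measurable borel"
  using lipschitz_on_inv by (intro borel_measurable_continuous_onI lipschitz_on_continuous_on)

lemma emeasure_vimage_le:
  assumes A: "A \<in> sets borel"
  shows "emeasure lborel (\<psi> -` A) \<le> ennreal (1 / (1 - m) ^ DIM('a)) * emeasure lborel A"
proof -
  define f where "f = cart_of_eucl \<circ> \<psi> \<circ> eucl_of_cart"
  define f' where "f' x = cart_of_eucl \<circ> \<psi>' (eucl_of_cart x) \<circ> eucl_of_cart" for x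
  have "(f has_derivative f' x) (at x)" for x
    unfolding f_def f'_def
    by (intro diff_chain_at has_derivative bounded_linear_imp_has_derivative
        bounded_linear_cart_of_eucl bounded_linear_eucl_of_cart)
  moreover have "bij f"
    unfolding f_def
    by (intro bij_comp bij o_bij[of eucl_of_cart] o_bij[of cart_of_eucl]) (auto simp: fun_eq_iff)
  moreover have "norm (f' x h - h) \<le> m * norm h" for x h
  proof -
    have "f' x h - h = cart_of_eucl (\<psi>' (eucl_of_cart x) (eucl_of_cart h) - eucl_of_cart h)"
      by (simp add: f'_def linear_diff[OF bounded_linear_cart_of_eucl[THEN bounded_linear.linear]])
    then show ?thesis
      using norm_deriv_minus_id_le[of "eucl_of_cart x" "eucl_of_cart h"]
        norm_cart_of_eucl[of "eucl_of_cart h"] by simp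
  qed
  ultimately have "emeasure lborel (f -` (eucl_of_cart -` A))
      \<le> ennreal (1 / (1 - m) ^ CARD('a basis_index)) * emeasure lborel (eucl_of_cart -` A)"
    using less_one
    by (intro emeasure_vimage_le_near_identity_cart measurable_sets_borel[OF measurable_eucl_of_cart A])
  moreover have "f -` (eucl_of_cart -` A) = eucl_of_cart -` (\<psi> -` A)"
    by (auto simp: f_def)
  ultimately show ?thesis
    using A measurable_sets_borel[OF borel_measurable_psi A]
    by (simp add: emeasure_lborel_vimage_eucl_of_cart card_basis_index)
qed

lemma nn_integral_comp_le:
  assumes F: "F \<in> borel_measurable borel"
  shows "(\<integral>\<^sup>+x. F (\<psi> x) \<partial>lborel) \<le> ennreal (1 / (1 - m) ^ DIM('a)) * (\<integral>\<^sup>+y. F y \<partial>lborel)"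
proof -
  define K where "K = 1 / (1 - m) ^ DIM('a)"
  have "distr lborel borel \<psi> \<le> density lborel (\<lambda>_. ennreal K)"
  proof (subst le_measure_iff, simp, intro le_funI)
    fix A
    show "emeasure (distr lborel borel \<psi>) A \<le> emeasure (density lborel (\<lambda>_. ennreal K)) A"
      using emeasure_vimage_le[of A]
      by (cases "A \<in> sets borel")
         (simp_all add: K_def emeasure_distr emeasure_density nn_integral_cmult_indicator emeasure_notin_sets)
  qed
  then have "(\<integral>\<^sup>+y. F y \<partial>distr lborel borel \<psi>) \<le> (\<integral>\<^sup>+y. F y \<partial>density lborel (\<lambda>_. ennreal K))"
    by (intro nn_integral_mono_measure) simp_all
  then show ?thesis
    using F by (simp add: K_def nn_integral_distr nn_integral_density nn_integral_cmult)
qed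

(* The function h of the header: since |det psi'| >= (1 - m)^d, it bounds the density of
   psi_# gamma relative to gamma. *)
definition std_gaussian_ratio_bound :: "'a \<Rightarrow> real" where
  "std_gaussian_ratio_bound y = exp (((norm y)\<^sup>2 - (norm (inv \<psi> y))\<^sup>2) / 2) / (1 - m) ^ DIM('a)"

lemma borel_measurable_std_gaussian_ratio_bound [measurable]:
  "std_gaussian_ratio_bound \<in> borel_measurable borel"
  unfolding std_gaussian_ratio_bound_def by measurable

lemma emeasure_distr_std_gaussian_le:
  assumes A [measurable]: "A \<in> sets borel"
  shows "emeasure (distr std_gaussian borel \<psi>) A
    \<le> emeasure (density std_gaussian (\<lambda>y. ennreal (std_gaussian_ratio_bound y))) A"
proof -
  define G where "G x = (2 * pi) powr (- real DIM('a) / 2) * exp (- (norm x)\<^sup>2 / 2)" for x :: 'a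
  define K where "K = 1 / (1 - m) ^ DIM('a)"
  have [measurable]: "G \<in> borel_measurable borel"
    unfolding G_def by measurable
  have ratio: "ennreal K * ennreal (G (inv \<psi> y)) = ennreal (G y) * ennreal (std_gaussian_ratio_bound y)" for y
  proof -
    have "K * G (inv \<psi> y) = G y * std_gaussian_ratio_bound y"
      by (simp add: G_def K_def std_gaussian_ratio_bound_def field_simps flip: exp_add)
    then show ?thesis
      using less_one by (simp add: ennreal_mult[symmetric] G_def K_def std_gaussian_ratio_bound_def)
  qed
  have "emeasure (distr std_gaussian borel \<psi>) A = (\<integral>\<^sup>+x. ennreal (G x) * indicator (\<psi> -` A) x \<partial>lborel)"
    using A by (simp add: emeasure_distr std_gaussian_def emeasure_density G_def
        measurable_sets_borel[OF borel_measurable_psi])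
  also have "\<dots> = (\<integral>\<^sup>+x. ennreal (G (inv \<psi> (\<psi> x))) * indicator A (\<psi> x) \<partial>lborel)"
    by (simp add: indicator_def)
  also have "\<dots> \<le> ennreal K * (\<integral>\<^sup>+y. ennreal (G (inv \<psi> y)) * indicator A y \<partial>lborel)"
    unfolding K_def using A by (intro nn_integral_comp_le) measurable
  also have "\<dots> = (\<integral>\<^sup>+y. ennreal (G y) * (ennreal (std_gaussian_ratio_bound y) * indicator A y) \<partial>lborel)"
    using A by (simp add: nn_integral_cmult[symmetric] ratio mult.assoc[symmetric])
  also have "\<dots> = emeasure (density std_gaussian (\<lambda>y. ennreal (std_gaussian_ratio_bound y))) A"
    using A by (simp add: std_gaussian_def emeasure_density nn_integral_density G_def)
  finally show ?thesis .
qed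

lemma nn_integral_std_gaussian_ratio_bound_powr_le:
  assumes near: "\<And>x. norm (\<psi> x - x) \<le> r" and r: "0 \<le> r" and p: "0 \<le> p"
  shows "(\<integral>\<^sup>+y. ennreal (std_gaussian_ratio_bound y powr p) \<partial>distr std_gaussian borel \<psi>)
    \<le> ennreal ((1 / (1 - m) ^ DIM('a)) powr p * exp (p * r\<^sup>2 / 2)
        * exp (p * r * sqrt (real DIM('a)) + (p * r)\<^sup>2 / 2))"
proof -
  define K where "K = 1 / (1 - m) ^ DIM('a)"
  have "0 < K" using less_one by (simp add: K_def)
  have pointwise: "std_gaussian_ratio_bound (\<psi> x) powr p \<le> K powr p * exp (p * r\<^sup>2 / 2) * exp (p * r * norm x)"
    for x :: 'a
  proof -
    have "norm (\<psi> x) \<le> norm x + r"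
      using norm_triangle_ineq[of x "\<psi> x - x"] near[of x] by simp
    then have "(norm (\<psi> x))\<^sup>2 \<le> (norm x + r)\<^sup>2"
      by (intro power_mono) auto
    then have "((norm (\<psi> x))\<^sup>2 - (norm x)\<^sup>2) / 2 \<le> r\<^sup>2 / 2 + r * norm x"
      by (simp add: power2_eq_square algebra_simps)
    then have "exp (((norm (\<psi> x))\<^sup>2 - (norm x)\<^sup>2) / 2) powr p \<le> exp (r\<^sup>2 / 2 + r * norm x) powr p"
      using p by (intro powr_mono2) auto
    moreover have "std_gaussian_ratio_bound (\<psi> x) = K * exp (((norm (\<psi> x))\<^sup>2 - (norm x)\<^sup>2) / 2)"
      by (simp add: std_gaussian_ratio_bound_def K_def)
    moreover have "exp (r\<^sup>2 / 2 + r * norm x) powr p = exp (p * r\<^sup>2 / 2) * exp (p * r * norm x)"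
      by (simp add: exp_powr_real algebra_simps flip: exp_add)
    ultimately show ?thesis
      using \<open>0 < K\<close> by (simp add: powr_mult mult.assoc mult_left_mono)
  qed
  have "(\<integral>\<^sup>+y. ennreal (std_gaussian_ratio_bound y powr p) \<partial>distr std_gaussian borel \<psi>)
      = (\<integral>\<^sup>+x. ennreal (std_gaussian_ratio_bound (\<psi> x) powr p) \<partial>std_gaussian)"
    by (simp add: nn_integral_distr)
  also have "\<dots> \<le> (\<integral>\<^sup>+x. ennreal (K powr p * exp (p * r\<^sup>2 / 2)) * ennreal (exp (p * r * norm x)) \<partial>(std_gaussian :: 'a measure))"
    using pointwise by (intro nn_integral_mono) (simp add: ennreal_mult[symmetric] ennreal_leI)
  also have "\<dots> \<le> ennreal (K powr p * exp (p * r\<^sup>2 / 2)) * ennreal (exp (p * r * sqrt (real DIM('a)) + (p * r)\<^sup>2 / 2))"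
    using nn_integral_exp_norm_std_gaussian_le[of "p * r", where 'a='a] p r
    by (simp add: nn_integral_cmult mult_left_mono)
  finally show ?thesis
    by (simp add: K_def ennreal_mult[symmetric])
qed

lemma renyi_div_distr_std_gaussian_le:
  assumes near: "\<And>x. norm (\<psi> x - x) \<le> r" and r: "0 \<le> r" and q: "1 < q"
  shows "renyi_div q (distr std_gaussian borel \<psi>) std_gaussian
    \<le> ereal (ln (1 / (1 - m) ^ DIM('a)) + sqrt (real DIM('a)) * r + q * r\<^sup>2 / 2)"
proof -
  interpret prob_space "std_gaussian :: 'a measure"
    by (rule prob_space_std_gaussian)
  define K where "K = 1 / (1 - m) ^ DIM('a)"
  define B where "B = K powr (q - 1) * exp ((q - 1) * r\<^sup>2 / 2)
    * exp ((q - 1) * r * sqrt (real DIM('a)) + ((q - 1) * r)\<^sup>2 / 2)"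
  have "1 \<le> K"
    using nonneg less_one by (simp add: K_def power_le_one)
  then have "1 \<le> B"
    unfolding B_def using q r by (intro mult_ge1_I ge_one_powr_ge_zero) auto
  have "renyi_div q (distr std_gaussian borel \<psi>) std_gaussian \<le> ereal (ln B / (q - 1))"
  proof (rule renyi_div_le)
    have le: "emeasure (distr std_gaussian borel \<psi>) A
        \<le> emeasure (density std_gaussian (\<lambda>y. ennreal (std_gaussian_ratio_bound y))) A"
      if "A \<in> sets std_gaussian" for A
      using that emeasure_distr_std_gaussian_le by simp
    have meas: "std_gaussian_ratio_bound \<in> borel_measurable std_gaussian"
      unfolding measurable_cong_sets[OF sets_std_gaussian refl] by measurable
    show "absolutely_continuous std_gaussian (distr std_gaussian borel \<psi>)"
      using meas by (intro absolutely_continuous_of_le_density[OF _ _ le]) simp_all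
    show "AE x in std_gaussian. RN_deriv std_gaussian (distr std_gaussian borel \<psi>) x
        \<le> ennreal (std_gaussian_ratio_bound x)"
      using meas by (intro AE_RN_deriv_le[OF _ _ le]) simp_all
    show "(\<integral>\<^sup>+x. ennreal (std_gaussian_ratio_bound x powr (q - 1)) \<partial>distr std_gaussian borel \<psi>)
        \<le> ennreal B"
      unfolding B_def K_def using near r q by (intro nn_integral_std_gaussian_ratio_bound_powr_le) auto
  qed (use q \<open>1 \<le> B\<close> in simp_all)
  also have "ln B / (q - 1) = ln K + sqrt (real DIM('a)) * r + q * r\<^sup>2 / 2"
    using q \<open>1 \<le> K\<close> by (simp add: B_def ln_mult ln_powr field_simps power2_eq_square)
  finally show ?thesis
    by (simp add: K_def)
qed

end

theorem lemma15:
  fixes \<psi> :: "'a::euclidean_space \<Rightarrow> 'a"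
    and \<psi>' :: "'a \<Rightarrow> 'a \<Rightarrow> 'a"
    and m1 m2 q :: real
  assumes deriv: "\<And>v. (\<psi> has_derivative \<psi>' v) (at v)"
    and bij: "bij \<psi>"
    and m1: "0 \<le> m1" and m2: "0 \<le> m2" "m2 < 1"
    and bound1: "\<And>v. norm (\<psi> v - v) \<le> m1"
    and bound2: "\<And>v. onorm (\<lambda>h. \<psi>' v h - h) \<le> m2"
    and q: "1 < q"
  shows "renyi_div q (distr std_gaussian borel \<psi>) std_gaussian
           \<le> ereal (real DIM('a) * m2 / (1 - m2) + sqrt (real DIM('a)) * m1 + q * m1\<^sup>2 / 2)"
proof -
  interpret near_identity_diffeo \<psi> \<psi>' m2
    using deriv bij m2 bound2 by unfold_locales
  have "renyi_div q (distr std_gaussian borel \<psi>) std_gaussian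
      \<le> ereal (ln (1 / (1 - m2) ^ DIM('a)) + sqrt (real DIM('a)) * m1 + q * m1\<^sup>2 / 2)"
    using bound1 m1 q by (rule renyi_div_distr_std_gaussian_le)
  also have "\<dots> \<le> ereal (real DIM('a) * m2 / (1 - m2) + sqrt (real DIM('a)) * m1 + q * m1\<^sup>2 / 2)"
    using ln_inverse_power_le[OF m2(2), of "DIM('a)"] by simp
  finally show ?thesis .
qed

end
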